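(* There is a constant $\alpha'\in(0,\pi/2)$ such that the following holds. Let $P,P'\subset\mathbb R^3$ be two open cuboids and $Q$ the convex hull of $P\cup P'$. If $x_c$ is a vertex of $P$ such that $d(x_c,P')=d_H(P,P')$, then $x_c$ is a vertex of $Q$, and $Q$ is contained in an open spherical cone with vertex $x_c$ and opening angle $2\alpha'$. The constant $\alpha'$ is independent of $P$, $P'$ and their location.
   Context: An open cuboid is the image of $]0,a[\times]0,b[\times]0,c[$ ($a,b,c>0$) under a rigid motion. $d_H(P,P')=\max(\sup_{x\in P}d(x,P'),\sup_{x'\in P'}d(x',P))$ is the Hausdorff distance. An open spherical cone with vertex $x_c$, axis unit vector $v$ and opening angle $2\theta$ is $\{x\ne x_c:(x-x_c)\cdot v>|x-x_c|\cos\theta\}$. *)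

theory Defs
  imports "HOL-Analysis.Analysis"
begin

definition open_cuboid :: "(real^3) set \<Rightarrow> bool" where
  "open_cuboid P \<longleftrightarrow> (\<exists>A t d. rotation_matrix A \<and> (\<forall>i. 0 < d $ i) \<and>
      P = (\<lambda>x. A *v x + t) ` box 0 d)"

definition cuboid_vertex :: "(real^3) set \<Rightarrow> real^3 \<Rightarrow> bool" where
  "cuboid_vertex P v \<longleftrightarrow> (\<exists>A t d c. rotation_matrix A \<and> (\<forall>i. 0 < d $ i) \<and>
      P = (\<lambda>x. A *v x + t) ` box 0 d \<and> (\<forall>i. c $ i = 0 \<or> c $ i = d $ i) \<and>
      v = A *v c + t)"

text \<open>Vertex of a (convex, possibly open) polytope: extreme point of its closure.\<close>
definition polytope_vertex :: "(real^3) set \<Rightarrow> real^3 \<Rightarrow> bool" where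
  "polytope_vertex Q v \<longleftrightarrow> v extreme_point_of (closure Q)"

definition hausdorff_dist :: "(real^3) set \<Rightarrow> (real^3) set \<Rightarrow> real" where
  "hausdorff_dist P P' = max (SUP x\<in>P. infdist x P') (SUP x\<in>P'. infdist x P)"

text \<open>Open spherical cone with vertex xc, unit axis v, opening angle 2 theta.\<close>
definition spherical_cone :: "real^3 \<Rightarrow> real^3 \<Rightarrow> real \<Rightarrow> (real^3) set" where
  "spherical_cone xc v \<theta> = {x. x \<noteq> xc \<and> (x - xc) \<bullet> v > norm (x - xc) * cos \<theta>}"

end

theory Submission
  imports Defs
begin

text \<open>
  Near its vertex xc the closed cuboid P lies in the fat cone
  {x. |x - xc|/2 \<le> (x - xc)\<bullet>u} around its inner diagonal u. Let d be the Hausdorff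
  distance. If d > 0, the unit vector w from xc to its nearest point of P' gives a
  supporting half-space: P' lies in {(y - xc)\<bullet>w \<ge> d}, and every point of P, being within d
  of P', lies in {(x - xc)\<bullet>w \<ge> 0}; if d = 0 take w = u. Since every point of P' is
  within d of P, both P and P' lie in the fat cone {|x - xc|/6 \<le> (x - xc)\<bullet>v} with v the
  direction of u + 2w. Hence P \<union> P' lies in the convex spherical cone of half-angle
  arccos (1/7), which therefore contains the convex hull, and whose closure keeps xc extreme.
\<close>

lemma le_infdistI:
  assumes "A \<noteq> {}" and "\<And>y. y \<in> A \<Longrightarrow> r \<le> dist x y"
  shows "r \<le> infdist x A"
  unfolding infdist_eq_setdist using assms by (intro le_setdistI) auto

lemma bdd_above_image_infdist:
  assumes "bounded B" and "A \<noteq> {}"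
  shows "bdd_above ((\<lambda>x. infdist x A) ` B)"
proof -
  obtain a where a: "a \<in> A" using assms by blast
  obtain x0 r where r: "B \<subseteq> cball x0 r" using assms bounded_subset_cball by blast
  show ?thesis
  proof (rule bdd_aboveI2)
    fix x assume "x \<in> B"
    then have "dist x0 x \<le> r" using r by auto
    moreover have "infdist x A \<le> dist x a" using a by (rule infdist_le)
    moreover have "dist x a \<le> dist x x0 + dist x0 a" by (rule dist_triangle)
    ultimately show "infdist x A \<le> r + dist x0 a" by (simp add: dist_commute)
  qed
qed

lemma infdist_le_hausdorff_dist:
  assumes "bounded P" "bounded P'" "P \<noteq> {}" "P' \<noteq> {}"
  shows "x \<in> P \<Longrightarrow> infdist x P' \<le> hausdorff_dist P P'"
    and "y \<in> P' \<Longrightarrow> infdist y P \<le> hausdorff_dist P P'"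
proof -
  assume "x \<in> P"
  then have "infdist x P' \<le> (SUP x\<in>P. infdist x P')"
    using bdd_above_image_infdist[of P P'] assms by (intro cSUP_upper) auto
  then show "infdist x P' \<le> hausdorff_dist P P'" unfolding hausdorff_dist_def by linarith
next
  assume "y \<in> P'"
  then have "infdist y P \<le> (SUP x\<in>P'. infdist x P)"
    using bdd_above_image_infdist[of P' P] assms by (intro cSUP_upper) auto
  then show "infdist y P \<le> hausdorff_dist P P'" unfolding hausdorff_dist_def by linarith
qed

lemma open_cuboidD:
  assumes "open_cuboid P"
  shows "open P" "convex P" "bounded P" "P \<noteq> {}"
proof -
  obtain A t d where A: "rotation_matrix A" and d: "\<forall>i. 0 < d $ i"
    and P: "P = (\<lambda>x. A *v x + t) ` box 0 d"
    using assms unfolding open_cuboid_def by blast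
  let ?R = "(\<lambda>x. A *v x) ` box 0 d"
  have P_eq: "P = (\<lambda>x. t + x) ` ?R" unfolding P image_image by (simp add: add.commute)
  have lin: "linear (\<lambda>x. A *v (x::real^3))" by simp
  have "surj (\<lambda>x. A *v (x::real^3))"
    using A by (simp add: orthogonal_transformation_surj orthogonal_transformation_matrix
        rotation_matrix_def)
  then have "open ?R" using open_box lin by (intro open_surjective_linear_image)
  then show "open P" unfolding P_eq by (rule open_translation)
  have "convex ?R" using lin convex_box(2) by (rule convex_linear_image)
  then show "convex P" unfolding P_eq by (rule convex_translation)
  have "bounded ?R" using bounded_box lin
    by (intro bounded_linear_image) (auto simp: linear_conv_bounded_linear)
  then show "bounded P" unfolding P_eq by (rule bounded_translation)
  show "P \<noteq> {}" using d by (simp add: P interval_eq_empty_cart not_le)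
qed

lemma box_corner_norm_le_inner:
  fixes z c d :: "real^'n"
  assumes z: "z \<in> box 0 d" and c: "\<forall>i. c $ i = 0 \<or> c $ i = d $ i"
  shows "norm (z - c) \<le> (z - c) \<bullet> (\<chi> i. if c $ i = 0 then 1 else -1)"
proof -
  have z_bounds: "0 < z $ i \<and> z $ i < d $ i" for i using z by (simp add: mem_box_cart)
  have "(z - c) $ i * (if c $ i = 0 then 1 else -1) = \<bar>(z - c) $ i\<bar>" for i
    using z_bounds[of i] c[rule_format, of i] by auto
  then have "(z - c) \<bullet> (\<chi> i. if c $ i = 0 then 1 else -1) = (\<Sum>i\<in>UNIV. \<bar>(z - c) $ i\<bar>)"
    unfolding inner_vec_def by simp
  then show ?thesis using norm_le_l1_cart[of "z - c"] by simp
qed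

lemma cuboid_vertex_in_closure:
  assumes "cuboid_vertex P xc"
  shows "xc \<in> closure P"
proof -
  obtain A t d c where "rotation_matrix A" and d: "\<forall>i. 0 < d $ i"
    and P: "P = (\<lambda>x. A *v x + t) ` box 0 d" and c: "\<forall>i. c $ i = 0 \<or> c $ i = d $ i"
    and xc: "xc = A *v c + t"
    using assms unfolding cuboid_vertex_def by blast
  have ne: "box 0 d \<noteq> {}" using d by (simp add: interval_eq_empty_cart not_le)
  have "c \<in> cbox 0 d" using c d unfolding mem_box_cart by (metis order_refl zero_index less_imp_le)
  then have "c \<in> closure (box 0 d)" using closure_box[OF ne] by simp
  moreover have "(\<lambda>x. A *v x + t) ` closure (box 0 d) \<subseteq> closure P"
    by (rule image_closure_subset) (auto simp: P intro!: continuous_intros closure_subset[THEN subsetD])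
  ultimately show ?thesis using xc by blast
qed

lemma cuboid_vertex_fat_cone:
  assumes "cuboid_vertex P xc"
  obtains u where "norm u = 1" "\<forall>x\<in>closure P. norm (x - xc) / 2 \<le> (x - xc) \<bullet> u"
proof -
  obtain A t d c where A: "rotation_matrix A"
    and P: "P = (\<lambda>x. A *v x + t) ` box 0 d" and c: "\<forall>i. c $ i = 0 \<or> c $ i = d $ i"
    and xc: "xc = A *v c + t"
    using assms unfolding cuboid_vertex_def by blast
  have ot: "orthogonal_transformation (\<lambda>x. A *v (x::real^3))"
    using A by (simp add: orthogonal_transformation_matrix rotation_matrix_def)
  have inner_A: "(A *v a) \<bullet> (A *v b) = a \<bullet> b" for a b
    using ot orthogonal_transformation_def by blast
  have norm_A: "norm (A *v a) = norm a" for a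
    using ot orthogonal_transformation_norm by blast
  define s :: "real^3" where "s = (\<chi> i. if c $ i = 0 then 1 else -1)"
  have ns: "norm s = sqrt 3"
    unfolding s_def by (simp add: norm_eq_sqrt_inner inner_vec_def sum_3)
  have ns2: "norm s \<le> 2" unfolding ns by (simp add: real_sqrt_le_iff[of 3 4, simplified] real_le_lsqrt)
  have ns0: "norm s > 0" unfolding ns by simp
  define u where "u = (A *v s) /\<^sub>R norm s"
  have "norm u = 1" unfolding u_def using norm_A ns0 by simp
  have "P \<subseteq> {x. norm (x - xc) / 2 \<le> (x - xc) \<bullet> u}"
  proof
    fix x assume "x \<in> P"
    then obtain z where z: "z \<in> box 0 d" and x: "x = A *v z + t" using P by auto
    have xd: "x - xc = A *v (z - c)" using x xc by (simp add: matrix_vector_mult_diff_distrib)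
    have "norm (z - c) / 2 \<le> norm (z - c) / norm s" using ns2 ns0 by (intro divide_left_mono) auto
    also have "\<dots> \<le> ((z - c) \<bullet> s) / norm s"
      using box_corner_norm_le_inner[OF z c] ns0 unfolding s_def by (simp add: divide_right_mono)
    also have "\<dots> = (x - xc) \<bullet> u"
      unfolding xd u_def using inner_A by (simp add: divide_inverse_commute)
    finally show "x \<in> {x. norm (x - xc) / 2 \<le> (x - xc) \<bullet> u}" using xd norm_A by simp
  qed
  moreover have "closed {x. norm (x - xc) / 2 \<le> (x - xc) \<bullet> u}"
    by (intro closed_Collect_le continuous_intros) auto
  ultimately have "\<forall>x\<in>closure P. norm (x - xc) / 2 \<le> (x - xc) \<bullet> u"
    using closure_minimal by blast
  with \<open>norm u = 1\<close> show ?thesis by (rule that)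
qed

lemma apex_notin_open_halfspace:
  fixes a u :: "'a::real_inner"
  assumes "open S" "u \<noteq> 0" "\<forall>x\<in>S. 0 \<le> (x - a) \<bullet> u"
  shows "a \<notin> S"
proof
  assume "a \<in> S"
  then obtain e where e: "e > 0" "ball a e \<subseteq> S" using assms open_contains_ball by blast
  define z where "z = a - (e / 2 / norm u) *\<^sub>R u"
  have "dist a z = e / 2" unfolding z_def using e assms(2) by (simp add: dist_norm)
  then have "z \<in> S" using e by auto
  then have "0 \<le> (z - a) \<bullet> u" using assms(3) by blast
  moreover have "(z - a) \<bullet> u = - ((e / 2 / norm u) * (u \<bullet> u))" unfolding z_def by simp
  moreover have "0 < (e / 2 / norm u) * (u \<bullet> u)" using e assms(2) by simp
  ultimately show False by linarith
qed

lemma halfspace_at_infdist: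
  fixes a :: "'a::euclidean_space"
  assumes "convex S" "S \<noteq> {}" "0 < infdist a S"
  obtains w where "norm w = 1" "\<forall>y\<in>S. infdist a S \<le> (y - a) \<bullet> w"
proof -
  obtain p where p: "p \<in> closure S" and closest: "\<forall>z\<in>closure S. dist a p \<le> dist a z"
    using distance_attains_inf[OF closed_closure, of S a] assms(2) by (metis closure_eq_empty)
  have "infdist a S = infdist a (closure S)" by (simp add: infdist_eq_setdist)
  also have "\<dots> = dist a p" using p closest
    by (intro antisym infdist_le le_infdistI) auto
  finally have D: "infdist a S = norm (p - a)" by (simp add: dist_norm norm_minus_commute)
  define w where "w = (p - a) /\<^sub>R norm (p - a)"
  have "norm w = 1" unfolding w_def using D assms(3) by simp
  moreover have "infdist a S \<le> (y - a) \<bullet> w" if "y \<in> S" for y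
  proof -
    have "(a - p) \<bullet> (y - p) \<le> 0"
      using any_closest_point_dot[OF convex_closure[OF assms(1)] closed_closure p _ closest]
        closure_subset that by blast
    moreover have "(y - a) \<bullet> (p - a) = (p - a) \<bullet> (p - a) - (a - p) \<bullet> (y - p)"
      by (simp add: inner_diff_left inner_diff_right inner_commute)
    ultimately have "norm (p - a) * norm (p - a) \<le> (y - a) \<bullet> (p - a)"
      by (simp add: norm_eq_sqrt_inner)
    then have "norm (p - a) \<le> ((y - a) \<bullet> (p - a)) / norm (p - a)"
      using D assms(3) by (simp add: pos_le_divide_eq)
    then show ?thesis using D unfolding w_def by (simp add: divide_inverse_commute)
  qed
  ultimately show ?thesis by (intro that) auto
qed

lemma inner_nonneg_within_infdist:
  fixes a w :: "'a::real_inner"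
  assumes "A \<noteq> {}" "norm w = 1" "\<forall>y\<in>A. d \<le> (y - a) \<bullet> w" "infdist x A \<le> d"
  shows "0 \<le> (x - a) \<bullet> w"
proof -
  have "d - (x - a) \<bullet> w \<le> dist x y" if "y \<in> A" for y
  proof -
    have "(y - x) \<bullet> w \<le> norm (y - x)" using norm_cauchy_schwarz[of "y - x" w] assms(2) by simp
    moreover have "(y - x) \<bullet> w = (y - a) \<bullet> w - (x - a) \<bullet> w" by (simp add: inner_diff_left)
    moreover have "norm (y - x) = dist x y" by (simp add: dist_norm norm_minus_commute)
    ultimately show ?thesis using assms(3) that by fastforce
  qed
  then have "d - (x - a) \<bullet> w \<le> infdist x A" using assms(1) by (intro le_infdistI)
  then show ?thesis using assms(4) by linarith
qed

lemma fat_cone_defect_le_infdist: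
  fixes a u :: "'a::real_inner"
  assumes "T \<noteq> {}" "norm u = 1" "\<forall>z\<in>T. norm (z - a) / 2 \<le> (z - a) \<bullet> u"
  shows "norm (y - a) / 2 - (y - a) \<bullet> u \<le> 3 / 2 * infdist y T"
proof -
  have "norm (y - a) / 3 - 2 / 3 * ((y - a) \<bullet> u) \<le> dist y z" if "z \<in> T" for z
  proof -
    have "(z - y) \<bullet> u \<le> norm (z - y)" using norm_cauchy_schwarz[of "z - y" u] assms(2) by simp
    moreover have "norm (y - a) \<le> norm (z - a) + norm (y - z)"
      using norm_triangle_ineq[of "z - a" "y - z"] by simp
    moreover have "(y - a) \<bullet> u = (z - a) \<bullet> u - (z - y) \<bullet> u" by (simp add: inner_diff_left)
    moreover have "norm (y - z) = dist y z" "norm (z - y) = dist y z"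
      by (simp_all add: dist_norm norm_minus_commute)
    moreover have "norm (z - a) / 2 \<le> (z - a) \<bullet> u" using assms(3) that by blast
    ultimately show ?thesis by linarith
  qed
  then have "norm (y - a) / 3 - 2 / 3 * ((y - a) \<bullet> u) \<le> infdist y T"
    using assms(1) by (intro le_infdistI)
  then show ?thesis by linarith
qed

lemma fat_cone_of_two_sets:
  fixes a u w :: "'a::real_inner"
  assumes "P \<noteq> {}" "norm u = 1" "norm w = 1"
    and uP: "\<forall>x\<in>P. norm (x - a) / 2 \<le> (x - a) \<bullet> u" and wP: "\<forall>x\<in>P. 0 \<le> (x - a) \<bullet> w"
    and wP': "\<forall>y\<in>P'. d \<le> (y - a) \<bullet> w" and near: "\<forall>y\<in>P'. infdist y P \<le> d"
  obtains v where "norm v = 1" "\<forall>x\<in>P \<union> P'. norm (x - a) / 6 \<le> (x - a) \<bullet> v"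
proof -
  define g where "g = u + 2 *\<^sub>R w"
  have g3: "norm g \<le> 3" unfolding g_def using norm_triangle_ineq[of u "2 *\<^sub>R w"] assms by simp
  have g1: "1 \<le> norm g" unfolding g_def using norm_triangle_ineq2[of "2 *\<^sub>R w" "- u"] assms
    by (simp add: add.commute)
  have g_inner: "(x - a) \<bullet> g = (x - a) \<bullet> u + 2 * ((x - a) \<bullet> w)" for x
    by (simp add: g_def inner_add_right)
  have half: "norm (x - a) / 2 \<le> (x - a) \<bullet> g" if "x \<in> P \<union> P'" for x
    using that
  proof
    assume "x \<in> P"
    then have "norm (x - a) / 2 \<le> (x - a) \<bullet> u" "0 \<le> (x - a) \<bullet> w" using uP wP by auto
    then show ?thesis unfolding g_inner by linarith
  next
    assume x: "x \<in> P'"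
    have "norm (x - a) / 2 - (x - a) \<bullet> u \<le> 3 / 2 * infdist x P"
      by (rule fat_cone_defect_le_infdist[OF assms(1,2) uP])
    moreover have "infdist x P \<le> d" "d \<le> (x - a) \<bullet> w" using near wP' x by auto
    ultimately show ?thesis unfolding g_inner using infdist_nonneg[of x P] by linarith
  qed
  show ?thesis
  proof (rule that[of "g /\<^sub>R norm g"])
    have "norm g \<noteq> 0" using g1 by linarith
    then show "norm (g /\<^sub>R norm g) = 1" by simp
    show "\<forall>x\<in>P \<union> P'. norm (x - a) / 6 \<le> (x - a) \<bullet> (g /\<^sub>R norm g)"
    proof
      fix x assume "x \<in> P \<union> P'"
      have "norm (x - a) / 6 = (norm (x - a) / 2) / 3" by simp
      also have "\<dots> \<le> (norm (x - a) / 2) / norm g" using g1 g3 by (intro divide_left_mono) auto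
      also have "\<dots> \<le> ((x - a) \<bullet> g) / norm g"
        using half[OF \<open>x \<in> P \<union> P'\<close>] g1 by (intro divide_right_mono) auto
      also have "\<dots> = (x - a) \<bullet> (g /\<^sub>R norm g)" by (simp add: divide_inverse_commute)
      finally show "norm (x - a) / 6 \<le> (x - a) \<bullet> (g /\<^sub>R norm g)" .
    qed
  qed
qed

lemma supporting_direction_at_hausdorff_vertex:
  fixes a u :: "'a::euclidean_space"
  assumes "convex P'" "P \<noteq> {}" "P' \<noteq> {}" "norm u = 1"
    and uP: "\<forall>x\<in>P. norm (x - a) / 2 \<le> (x - a) \<bullet> u"
    and near: "\<forall>x\<in>P. infdist x P' \<le> d" "\<forall>y\<in>P'. infdist y P \<le> d"
    and a: "infdist a P' = d"
  obtains w where "norm w = 1" "\<forall>x\<in>P. 0 \<le> (x - a) \<bullet> w" "\<forall>y\<in>P'. d \<le> (y - a) \<bullet> w"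
proof (cases "d = 0")
  case True
  have "0 \<le> (y - a) \<bullet> u" if "y \<in> P'" for y
  proof -
    have "norm (y - a) / 2 - (y - a) \<bullet> u \<le> 3 / 2 * infdist y P"
      by (rule fat_cone_defect_le_infdist[OF assms(2,4) uP])
    moreover have "infdist y P \<le> 0" using near(2) that True by blast
    ultimately show ?thesis using norm_ge_zero[of "y - a"] by linarith
  qed
  moreover have "0 \<le> (x - a) \<bullet> u" if "x \<in> P" for x
  proof -
    have "norm (x - a) / 2 \<le> (x - a) \<bullet> u" using uP that by blast
    then show ?thesis using norm_ge_zero[of "x - a"] by linarith
  qed
  ultimately show ?thesis using True by (intro that[OF assms(4)]) auto
next
  case False
  then have "0 < infdist a P'" using a infdist_nonneg[of a P'] by linarith
  then obtain w where w: "norm w = 1" "\<forall>y\<in>P'. d \<le> (y - a) \<bullet> w"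
    using halfspace_at_infdist[OF assms(1,3)] a by metis
  moreover have "\<forall>x\<in>P. 0 \<le> (x - a) \<bullet> w"
    using inner_nonneg_within_infdist[OF assms(3) w] near(1) by blast
  ultimately show ?thesis by (intro that) auto
qed

lemma cuboid_pair_fat_cone:
  assumes oP: "open_cuboid P" and oP': "open_cuboid P'" and "cuboid_vertex P xc"
    and "infdist xc P' = hausdorff_dist P P'"
  obtains v where "norm v = 1" "\<forall>x\<in>P \<union> P'. norm (x - xc) / 6 \<le> (x - xc) \<bullet> v"
proof -
  obtain u where u: "norm u = 1" "\<forall>x\<in>closure P. norm (x - xc) / 2 \<le> (x - xc) \<bullet> u"
    using cuboid_vertex_fat_cone[OF \<open>cuboid_vertex P xc\<close>] by blast
  have uP: "\<forall>x\<in>P. norm (x - xc) / 2 \<le> (x - xc) \<bullet> u" using u closure_subset by blast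
  note P = open_cuboidD[OF oP] and P' = open_cuboidD[OF oP']
  note near = infdist_le_hausdorff_dist[OF P(3) P'(3) P(4) P'(4)]
  obtain w where w: "norm w = 1" "\<forall>x\<in>P. 0 \<le> (x - xc) \<bullet> w"
    "\<forall>y\<in>P'. hausdorff_dist P P' \<le> (y - xc) \<bullet> w"
    using supporting_direction_at_hausdorff_vertex[OF P'(2) P(4) P'(4) u(1) uP] near assms(4)
    by blast
  show ?thesis
    using fat_cone_of_two_sets[OF P(4) u(1) w(1) uP w(2,3)] near(2) that by blast
qed

lemma convex_spherical_cone:
  assumes "0 \<le> cos \<theta>"
  shows "convex (spherical_cone xc v \<theta>)"
  unfolding convex_alt
proof (intro ballI allI impI)
  fix x y and t :: real
  assume x: "x \<in> spherical_cone xc v \<theta>" and y: "y \<in> spherical_cone xc v \<theta>" and t: "0 \<le> t \<and> t \<le> 1"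
  let ?z = "(1 - t) *\<^sub>R x + t *\<^sub>R y"
  have hx: "norm (x - xc) * cos \<theta> < (x - xc) \<bullet> v" and hy: "norm (y - xc) * cos \<theta> < (y - xc) \<bullet> v"
    using x y by (auto simp: spherical_cone_def)
  have eq: "?z - xc = (1 - t) *\<^sub>R (x - xc) + t *\<^sub>R (y - xc)" by (simp add: algebra_simps)
  have "norm (?z - xc) * cos \<theta> \<le> ((1 - t) * norm (x - xc) + t * norm (y - xc)) * cos \<theta>"
    unfolding eq using norm_triangle_ineq[of "(1 - t) *\<^sub>R (x - xc)" "t *\<^sub>R (y - xc)"] t assms
    by (intro mult_right_mono) auto
  also have "\<dots> < (1 - t) * ((x - xc) \<bullet> v) + t * ((y - xc) \<bullet> v)"
  proof (cases "t = 0")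
    case False
    then have "t * (norm (y - xc) * cos \<theta>) < t * ((y - xc) \<bullet> v)" using hy t by simp
    moreover have "(1 - t) * (norm (x - xc) * cos \<theta>) \<le> (1 - t) * ((x - xc) \<bullet> v)"
      using hx t by (intro mult_left_mono) auto
    ultimately show ?thesis by (simp add: algebra_simps)
  qed (use hx in simp)
  also have "\<dots> = (?z - xc) \<bullet> v" unfolding eq by (simp add: inner_add_left)
  finally show "?z \<in> spherical_cone xc v \<theta>"
    by (auto simp: spherical_cone_def)
qed

lemma apex_extreme_point_of_fat_cone:
  fixes a v :: "'a::real_inner"
  assumes "0 < c" "\<forall>x\<in>S. c * norm (x - a) \<le> (x - a) \<bullet> v" "a \<in> S"
  shows "a extreme_point_of S"
  unfolding extreme_point_of_def
proof (intro conjI ballI \<open>a \<in> S\<close>)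
  fix x y assume x: "x \<in> S" and y: "y \<in> S"
  show "a \<notin> open_segment x y"
  proof
    assume "a \<in> open_segment x y"
    then obtain t where "x \<noteq> y" "0 < t" "t < 1" and a: "a = (1 - t) *\<^sub>R x + t *\<^sub>R y"
      by (auto simp: in_segment)
    have "(1 - t) *\<^sub>R (x - a) + t *\<^sub>R (y - a) = 0" using a by (simp add: algebra_simps)
    then have sum0: "(1 - t) * ((x - a) \<bullet> v) + t * ((y - a) \<bullet> v) = 0"
      by (metis inner_add_left inner_scaleR_left inner_zero_left)
    have nx: "c * norm (x - a) \<le> (x - a) \<bullet> v" and ny: "c * norm (y - a) \<le> (y - a) \<bullet> v"
      using assms(2) x y by auto
    moreover have "0 \<le> c * norm (x - a)" "0 \<le> c * norm (y - a)" using assms(1) by auto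
    ultimately have "0 \<le> (1 - t) * ((x - a) \<bullet> v)" "0 \<le> t * ((y - a) \<bullet> v)"
      using \<open>0 < t\<close> \<open>t < 1\<close> by simp_all
    then have "(1 - t) * ((x - a) \<bullet> v) = 0" "t * ((y - a) \<bullet> v) = 0" using sum0 by linarith+
    then have "(x - a) \<bullet> v = 0" "(y - a) \<bullet> v = 0" using \<open>0 < t\<close> \<open>t < 1\<close> by simp_all
    then have "x = a" "y = a" using nx ny assms(1) by (auto simp: mult_le_0_iff)
    with \<open>x \<noteq> y\<close> show False by simp
  qed
qed

lemma convex_hull_in_spherical_cone:
  fixes S :: "(real^3) set"
  assumes "open S" "norm v = 1" and fat: "\<forall>x\<in>S. c * norm (x - a) \<le> (x - a) \<bullet> v"
    and "0 < cos \<theta>" "cos \<theta> < c" "a \<in> closure S"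
  shows "convex hull S \<subseteq> spherical_cone a v \<theta>"
    and "a extreme_point_of closure (convex hull S)"
proof -
  have "0 \<le> (x - a) \<bullet> v" if "x \<in> S" for x
  proof -
    have "0 \<le> c * norm (x - a)" using assms(4,5) by simp
    then show ?thesis using fat that by fastforce
  qed
  then have "a \<notin> S" using assms(1,2) by (intro apex_notin_open_halfspace[of S v]) auto
  have "x \<in> spherical_cone a v \<theta>" if "x \<in> S" for x
  proof -
    have "x \<noteq> a" using that \<open>a \<notin> S\<close> by blast
    then have "norm (x - a) * cos \<theta> < c * norm (x - a)" using assms(5) by simp
    moreover have "c * norm (x - a) \<le> (x - a) \<bullet> v" using fat that by blast
    ultimately have "norm (x - a) * cos \<theta> < (x - a) \<bullet> v" by linarith
    with \<open>x \<noteq> a\<close> show ?thesis unfolding spherical_cone_def by blast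
  qed
  then show hull: "convex hull S \<subseteq> spherical_cone a v \<theta>"
    using convex_spherical_cone assms(4) by (intro hull_minimal subsetI) auto
  have "closed {x. cos \<theta> * norm (x - a) \<le> (x - a) \<bullet> v}"
    by (intro closed_Collect_le continuous_intros)
  moreover have "spherical_cone a v \<theta> \<subseteq> {x. cos \<theta> * norm (x - a) \<le> (x - a) \<bullet> v}"
    by (auto simp: spherical_cone_def mult.commute)
  ultimately have "closure (convex hull S) \<subseteq> {x. cos \<theta> * norm (x - a) \<le> (x - a) \<bullet> v}"
    using hull by (meson closure_minimal order_trans)
  moreover have "a \<in> closure (convex hull S)"
    using assms(6) closure_mono[OF hull_subset[of S convex]] by blast
  ultimately show "a extreme_point_of closure (convex hull S)"
    using assms(4) by (intro apex_extreme_point_of_fat_cone) auto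
qed

theorem mainTheorem19:
  shows "\<exists>\<alpha>'. 0 < \<alpha>' \<and> \<alpha>' < pi / 2 \<and>
    (\<forall>P P' xc. open_cuboid P \<longrightarrow> open_cuboid P' \<longrightarrow> cuboid_vertex P xc \<longrightarrow>
       infdist xc P' = hausdorff_dist P P' \<longrightarrow>
       polytope_vertex (convex hull (P \<union> P')) xc \<and>
       (\<exists>v. norm v = 1 \<and> convex hull (P \<union> P') \<subseteq> spherical_cone xc v \<alpha>'))"
proof -
  define \<alpha> where "\<alpha> = arccos (1/7)"
  have cos\<alpha>: "cos \<alpha> = 1/7" unfolding \<alpha>_def by (simp add: cos_arccos)
  have "0 < \<alpha>" unfolding \<alpha>_def using arccos_less_arccos[of "1/7" 1] by simp
  moreover have "\<alpha> < pi / 2" unfolding \<alpha>_def using arccos_less_arccos[of 0 "1/7"] by simp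
  moreover have "polytope_vertex (convex hull (P \<union> P')) xc \<and>
      (\<exists>v. norm v = 1 \<and> convex hull (P \<union> P') \<subseteq> spherical_cone xc v \<alpha>)"
    if oP: "open_cuboid P" and oP': "open_cuboid P'" and vertex: "cuboid_vertex P xc"
      and hd: "infdist xc P' = hausdorff_dist P P'" for P P' xc
  proof -
    obtain v where v: "norm v = 1" "\<forall>x\<in>P \<union> P'. norm (x - xc) / 6 \<le> (x - xc) \<bullet> v"
      by (rule cuboid_pair_fat_cone[OF oP oP' vertex hd])
    have "open (P \<union> P')" using open_cuboidD(1) oP oP' by blast
    moreover have "\<forall>x\<in>P \<union> P'. 1/6 * norm (x - xc) \<le> (x - xc) \<bullet> v" using v(2) by simp
    moreover have "0 < cos \<alpha>" "cos \<alpha> < 1/6" using cos\<alpha> by simp_all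
    moreover have "xc \<in> closure (P \<union> P')"
      using cuboid_vertex_in_closure[OF vertex] closure_mono by blast
    ultimately show ?thesis
      using convex_hull_in_spherical_cone[OF _ v(1), of "P \<union> P'" "1/6" xc \<alpha>] v(1)
      unfolding polytope_vertex_def by blast
  qed
  ultimately show ?thesis by blast
qed

end
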